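(* Let $C$ be the index of a source row/column of the padded incident matrix $\widetilde A$, let $P_{\mathrm{cur}}$ be (a pair of) column indices of $X\in\mathbb{R}^{K\times d}$ holding the positional embedding of row/column $C$, and let $D$ be a target column index. Then: (1) a single transformer layer can simulate reading a row of $\widetilde A$, i.e. $X[:,D]\leftarrow\widetilde A[C,:]$ (as a column); and (2) a single transformer layer can simulate reading a column of $\widetilde A$, i.e. $X[:,D]\leftarrow\widetilde A[:,C]$.
   Context: Conventions: rows/columns indexed from $1$; $X[i,j]$ is the $(i,j)$ entry, $X[:,j]$ the $j$-th column, $\widetilde A[C,:]$ the $C$-th row. $\phi(x)=\max\{x,0\}$ entrywise. Hardmax $\sigma$: row $i$ of $\sigma(\Phi)$ is $\frac{1}{|S_i|}\sum_{k\in S_i}e_k$, $S_i=\{k:\Phi_{ik}=\max_j\Phi_{ij}\}$. Positional encoding: $\widehat\delta>0$ is the nearest representable approximation of the minimum increment angle, $R_{\widehat\delta}=\begin{bmatrix}\cos\widehat\delta&-\sin\widehat\delta\\ \sin\widehat\delta&\cos\widehat\delta\end{bmatrix}$, $p_0=(0,1)^\top$, $p_i=R_{\widehat\delta}^\top p_{i-1}$, position $i$ encoded by $(p_i^{(1)},p_i^{(2)})$. A weighted hypergraph has vertices $v_1,\dots,v_{n_v}$, hyperedges $e_1,\dots,e_{n_e}$ with weights $w(e_j)>0$; its incident matrix $A\in\mathbb{R}^{n_v\times n_e}$ has $A_{ij}=w(e_j)$ if $v_i\in e_j$ and $0$ otherwise; for $K\ge\max\{n_v,n_e\}+1$, the padded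 incident matrix $\widetilde A\in\mathbb{R}^{K\times K}$ has $\widetilde A_{i+1,j+1}=A_{ij}$ and zeros elsewhere. A transformer layer on $X\in\mathbb{R}^{K\times d}$ is $f(X,\widetilde A)=f_{\mathrm{mlp}}(f_{\mathrm{attn}}(X,\widetilde A))$, $f_{\mathrm{attn}}(X,\widetilde A)=\sum_{i\in M_A}\psi^{(i)}(X,\widetilde A)+\sum_{i\in M_{A^\top}}\psi^{(i)}(X,\widetilde A^\top)+\sum_{i\in M}\psi^{(i)}(X,I_K)+X$, $\psi(X,B)=B\,\sigma(XW_QW_K^\top X^\top)XW_V$ ($W_Q,W_K\in\mathbb{R}^{d\times2}$, $W_V\in\mathbb{R}^{d\times d}$), $f_{\mathrm{mlp}}(X)=Z^{(4)}W^{(4)}+X$, $Z^{(1)}=X$, $Z^{(j+1)}=\phi(Z^{(j)}W^{(j)})$ ($j=1,2,3$). Storage convention: scalars in the top row of a column (rest $0$), arrays of length $K-1$ in rows $2,\dots,K$ (top $0$); designated columns $B_{\mathrm{global}}$ (top $1$, rest $0$), $B_{\mathrm{local}}$ (top $0$, rest $1$), positional columns $P_1,P_2$ (array position $i$ holds $p_i^{(1)},p_i^{(2)}$), and scratchpad columns. "Simulating an operation" means the layer's weights can be chosen so that applying it to $X$ performs the stated update. *)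

theory Defs
  imports Complex_Main
begin

text \<open>Matrices are functions nat => nat => real, indexed from 1; the dimensions are
  carried explicitly and only entries within range matter (all sums range over
  explicit index intervals).\<close>

type_synonym mat = "nat \<Rightarrow> nat \<Rightarrow> real"

definition matmul :: "nat \<Rightarrow> mat \<Rightarrow> mat \<Rightarrow> mat" where
  "matmul n A B = (\<lambda>i j. \<Sum>k = 1..n. A i k * B k j)"

definition mtrans :: "mat \<Rightarrow> mat" where
  "mtrans A = (\<lambda>i j. A j i)"

definition hardmax :: "nat \<Rightarrow> mat \<Rightarrow> mat" where
  "hardmax K Phi = (\<lambda>i k.
     let m = Max {Phi i j | j. j \<in> {1..K}};
         S = {j \<in> {1..K}. Phi i j = m}
     in if k \<in> S then 1 / real (card S) else 0)"

definition relu_mat :: "mat \<Rightarrow> mat" where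
  "relu_mat Z = (\<lambda>i j. max (Z i j) 0)"

definition psi :: "nat \<Rightarrow> nat \<Rightarrow> mat \<Rightarrow> mat \<Rightarrow> mat \<Rightarrow> mat \<Rightarrow> mat \<Rightarrow> mat" where
  "psi K d X B WQ WK WV =
     matmul K B (matmul K (hardmax K (matmul 2 (matmul d X WQ) (mtrans (matmul d X WK))))
                          (matmul d X WV))"

record tlayer =
  headsA  :: "(mat \<times> mat \<times> mat) list"
  headsAT :: "(mat \<times> mat \<times> mat) list"
  headsI  :: "(mat \<times> mat \<times> mat) list"
  hid1 :: nat
  hid2 :: nat
  hid3 :: nat
  mW1 :: mat
  mW2 :: mat
  mW3 :: mat
  mW4 :: mat

definition idmat :: mat where
  "idmat = (\<lambda>i j. if i = j then 1 else 0)"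

definition f_attn :: "nat \<Rightarrow> nat \<Rightarrow> tlayer \<Rightarrow> mat \<Rightarrow> mat \<Rightarrow> mat" where
  "f_attn K d L X At = (\<lambda>i j.
       (\<Sum>(Q, Kw, V) \<leftarrow> headsA L. psi K d X At Q Kw V i j)
     + (\<Sum>(Q, Kw, V) \<leftarrow> headsAT L. psi K d X (mtrans At) Q Kw V i j)
     + (\<Sum>(Q, Kw, V) \<leftarrow> headsI L. psi K d X idmat Q Kw V i j)
     + X i j)"

definition f_mlp :: "nat \<Rightarrow> tlayer \<Rightarrow> mat \<Rightarrow> mat" where
  "f_mlp d L X =
     (let Z2 = relu_mat (matmul d X (mW1 L));
          Z3 = relu_mat (matmul (hid1 L) Z2 (mW2 L));
          Z4 = relu_mat (matmul (hid2 L) Z3 (mW3 L))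
      in (\<lambda>i j. matmul (hid3 L) Z4 (mW4 L) i j + X i j))"

definition tlayer_apply :: "nat \<Rightarrow> nat \<Rightarrow> tlayer \<Rightarrow> mat \<Rightarrow> mat \<Rightarrow> mat" where
  "tlayer_apply K d L X At = f_mlp d L (f_attn K d L X At)"

fun posenc :: "real \<Rightarrow> nat \<Rightarrow> real \<times> real" where
  "posenc \<delta> 0 = (0, 1)"
| "posenc \<delta> (Suc i) =
     (let (x, y) = posenc \<delta> i in (cos \<delta> * x + sin \<delta> * y, - sin \<delta> * x + cos \<delta> * y))"

definition weighted_hypergraph :: "nat \<Rightarrow> nat \<Rightarrow> (nat \<Rightarrow> nat set) \<Rightarrow> (nat \<Rightarrow> real) \<Rightarrow> bool" where
  "weighted_hypergraph nv ne E w \<longleftrightarrow> (\<forall>j\<in>{1..ne}. E j \<subseteq> {1..nv} \<and> w j > 0)"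

definition incident :: "(nat \<Rightarrow> nat set) \<Rightarrow> (nat \<Rightarrow> real) \<Rightarrow> mat" where
  "incident E w = (\<lambda>i j. if i \<in> E j then w j else 0)"

definition padded_incident :: "nat \<Rightarrow> nat \<Rightarrow> (nat \<Rightarrow> nat set) \<Rightarrow> (nat \<Rightarrow> real) \<Rightarrow> mat" where
  "padded_incident nv ne E w = (\<lambda>i j.
     if 2 \<le> i \<and> i \<le> nv + 1 \<and> 2 \<le> j \<and> j \<le> ne + 1 then incident E w (i - 1) (j - 1) else 0)"

text \<open>Storage-convention invariants of the state X (K x d): B_global, B_local, positional
  columns P1, P2 (row r >= 2 = array position r-1 holds p_(r-1)), and P_cur = (Pc1, Pc2)
  holding, as scalars in the top row, the positional embedding of row/column C.\<close>
definition state_ok :: "nat \<Rightarrow> real \<Rightarrow> nat \<Rightarrow> nat \<Rightarrow> nat \<Rightarrow> nat \<Rightarrow> nat \<Rightarrow> nat \<Rightarrow> nat \<Rightarrow> mat \<Rightarrow> bool" where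
  "state_ok K \<delta> Bg Bl P1 P2 Pc1 Pc2 C X \<longleftrightarrow>
     (\<forall>i\<in>{1..K}.
        X i Bg = (if i = 1 then 1 else 0) \<and>
        X i Bl = (if i = 1 then 0 else 1) \<and>
        X i P1 = (if i = 1 then 0 else fst (posenc \<delta> (i - 1))) \<and>
        X i P2 = (if i = 1 then 0 else snd (posenc \<delta> (i - 1))) \<and>
        X i Pc1 = (if i = 1 then X C P1 else 0) \<and>
        X i Pc2 = (if i = 1 then X C P2 else 0))"

end

theory Submission
  imports Defs
begin

text \<open>Both layers consist of two attention heads and an MLP without hidden units, i.e. the
  identity. The erasing head uses query = key = p_(r-1) in every row r (the top row reads
  p_0 = (0,1) from B_global). Its scores cos ((r - s) delta) peak only at s = r, because the
  angles (r - s) delta lie strictly between -2 pi and 2 pi; so its hardmax is the identity and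
  the value -X[:,D] clears column D. The selecting head has keys P + P_cur, which equal
  p_(s-1) in the rows s >= 2 but the stored position P_cur of C in the top row. Hence a row
  k >= 2 attends to itself alone, unless k = C, where it splits its attention evenly between
  itself and the top row. With the value 2 B_global in column D, the head output is therefore
  the indicator of C in column D, except in the top row, which is harmless since the first row
  and column of the padded incident matrix vanish; multiplying by A~^T resp. A~ yields A~[C,:]
  resp. A~[:,C].\<close>

definition sparse_mat :: "(real \<times> nat \<times> nat) list \<Rightarrow> mat" where
  "sparse_mat es = (\<lambda>r c. \<Sum>(s, a, b) \<leftarrow> es. if r = a \<and> c = b then s else 0)"

lemma matmul_sparse_mat:
  assumes "\<forall>(s, a, b) \<in> set es. a \<in> {1..d}"
  shows "matmul d X (sparse_mat es) i c = (\<Sum>(s, a, b) \<leftarrow> es. if c = b then s * X i a else 0)"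
  using assms
proof (induction es)
  case Nil
  then show ?case by (simp add: matmul_def sparse_mat_def)
next
  case (Cons e es)
  obtain s a b where e: "e = (s, a, b)" by (cases e)
  have "sparse_mat (e # es) r c' = (if r = a \<and> c' = b then s else 0) + sparse_mat es r c'" for r c'
    by (simp add: sparse_mat_def e)
  then have "matmul d X (sparse_mat (e # es)) i c
      = (\<Sum>r = 1..d. X i r * (if r = a \<and> c = b then s else 0)) + matmul d X (sparse_mat es) i c"
    by (simp add: matmul_def distrib_left sum.distrib)
  also have "(\<Sum>r = 1..d. X i r * (if r = a \<and> c = b then s else 0)) = (if c = b then s * X i a else 0)"
    using Cons.prems e by (simp add: if_distrib sum.delta cong: if_cong)
  finally show ?case using Cons by (simp add: e)
qed

definition attn_scores :: "nat \<Rightarrow> mat \<Rightarrow> mat \<Rightarrow> mat \<Rightarrow> mat" where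
  "attn_scores d X WQ WK = matmul 2 (matmul d X WQ) (mtrans (matmul d X WK))"

lemma attn_scores_eq:
  "attn_scores d X WQ WK k m =
     matmul d X WQ k 1 * matmul d X WK m 1 + matmul d X WQ k 2 * matmul d X WK m 2"
  by (simp add: attn_scores_def matmul_def mtrans_def numeral_2_eq_2)

lemma psi_eq:
  "psi K d X B WQ WK WV i j =
     (\<Sum>k = 1..K. B i k * (\<Sum>m = 1..K. hardmax K (attn_scores d X WQ WK) k m * matmul d X WV m j))"
  by (simp add: psi_def attn_scores_def matmul_def)

lemma hardmax_row_sum:
  assumes "j0 \<in> {1..K}" and "\<forall>j\<in>{1..K}. Phi i j \<le> Phi i j0"
  defines "S \<equiv> {j \<in> {1..K}. Phi i j = Phi i j0}"
  shows "(\<Sum>m = 1..K. hardmax K Phi i m * v m) = (\<Sum>m\<in>S. v m) / card S"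
proof -
  have "Max {Phi i j | j. j \<in> {1..K}} = Phi i j0"
    by (rule Max_eqI) (use assms in \<open>auto simp: setcompr_eq_image\<close>)
  then have "hardmax K Phi i m * v m = (if m \<in> S then v m / card S else 0)" for m
    by (simp add: hardmax_def S_def Let_def)
  then have "(\<Sum>m = 1..K. hardmax K Phi i m * v m) = (\<Sum>m = 1..K. if m \<in> S then v m / card S else 0)"
    by simp
  also have "\<dots> = (\<Sum>m\<in>S. v m / card S)"
    by (rule sum.mono_neutral_cong_right) (auto simp: S_def)
  finally show ?thesis
    by (simp add: sum_divide_distrib)
qed

lemma hardmax_row_sum_unique_max:
  assumes "j0 \<in> {1..K}" and "\<forall>j\<in>{1..K}. j \<noteq> j0 \<longrightarrow> Phi i j < Phi i j0"
  shows "(\<Sum>m = 1..K. hardmax K Phi i m * v m) = v j0"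
proof -
  have "{j \<in> {1..K}. Phi i j = Phi i j0} = {j0}"
    using assms by force
  with hardmax_row_sum[of j0 K Phi i v] assms show ?thesis
    by force
qed

lemma hardmax_row_sum_two_max:
  assumes "j0 \<in> {1..K}" and "j1 \<in> {1..K}" and "j0 \<noteq> j1" and "Phi i j1 = Phi i j0"
    and "\<forall>j\<in>{1..K}. j \<noteq> j0 \<and> j \<noteq> j1 \<longrightarrow> Phi i j < Phi i j0"
  shows "(\<Sum>m = 1..K. hardmax K Phi i m * v m) = (v j0 + v j1) / 2"
proof -
  have "{j \<in> {1..K}. Phi i j = Phi i j0} = {j0, j1}"
    using assms by force
  with hardmax_row_sum[of j0 K Phi i v] assms show ?thesis
    by force
qed

lemma posenc_eq_sin_cos: "posenc \<delta> n = (sin (real n * \<delta>), cos (real n * \<delta>))"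
  by (induction n) (simp_all add: distrib_right sin_add cos_add algebra_simps)

lemma posenc_inner_eq_cos_diff:
  "fst (posenc \<delta> a) * fst (posenc \<delta> b) + snd (posenc \<delta> a) * snd (posenc \<delta> b)
     = cos ((real a - real b) * \<delta>)"
  by (simp add: posenc_eq_sin_cos cos_diff left_diff_distrib algebra_simps)

lemma posenc_pred_inner:
  assumes "a \<ge> 1" and "b \<ge> 1"
  shows "fst (posenc \<delta> (a - 1)) * fst (posenc \<delta> (b - 1)) + snd (posenc \<delta> (a - 1)) * snd (posenc \<delta> (b - 1))
     = cos ((real a - real b) * \<delta>)"
  using posenc_inner_eq_cos_diff[of \<delta> "a - 1" "b - 1"] assms by (simp add: of_nat_diff)

lemma cos_less_one:
  fixes x :: real
  assumes "x \<noteq> 0" and "\<bar>x\<bar> < 2 * pi"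
  shows "cos x < 1"
proof -
  have "cos x \<noteq> 1"
  proof
    assume "cos x = 1"
    then obtain n :: int where n: "x = of_int n * (2 * pi)"
      using cos_one_2pi_int[of x] by (auto simp: mult.assoc)
    with assms have "\<bar>of_int n\<bar> < (1::real)"
      by (simp add: abs_mult)
    with n assms(1) show False
      by simp
  qed
  then show ?thesis
    using cos_le_one[of x] by linarith
qed

definition attention_only_layer ::
  "(mat \<times> mat \<times> mat) list \<Rightarrow> (mat \<times> mat \<times> mat) list \<Rightarrow> (mat \<times> mat \<times> mat) list \<Rightarrow> tlayer"
where
  "attention_only_layer hA hAT hI = \<lparr>headsA = hA, headsAT = hAT, headsI = hI,
     hid1 = 0, hid2 = 0, hid3 = 0, mW1 = \<lambda>_ _. 0, mW2 = \<lambda>_ _. 0, mW3 = \<lambda>_ _. 0, mW4 = \<lambda>_ _. 0\<rparr>"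

lemma tlayer_apply_attention_only_layer:
  "tlayer_apply K d (attention_only_layer hA hAT hI) X At i j =
       (\<Sum>(Q, Kw, V) \<leftarrow> hA. psi K d X At Q Kw V i j)
     + (\<Sum>(Q, Kw, V) \<leftarrow> hAT. psi K d X (mtrans At) Q Kw V i j)
     + (\<Sum>(Q, Kw, V) \<leftarrow> hI. psi K d X idmat Q Kw V i j)
     + X i j"
  by (simp add: tlayer_apply_def f_mlp_def f_attn_def attention_only_layer_def matmul_def)

locale read_setting =
  fixes K d :: nat and \<delta> :: real and Bg Bl P1 P2 Pc1 Pc2 D :: nat
  assumes delta_pos: "0 < \<delta>" and delta_small: "(real K - 1) * \<delta> < 2 * pi"
    and columns_distinct: "distinct [Bg, Bl, P1, P2, Pc1, Pc2, D]"
    and columns_in_range: "set [Bg, Bl, P1, P2, Pc1, Pc2, D] \<subseteq> {1..d}"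
begin

lemma cos_position_diff_less_one:
  assumes "a \<in> {1..K}" and "b \<in> {1..K}" and "a \<noteq> b"
  shows "cos ((real a - real b) * \<delta>) < 1"
proof (rule cos_less_one)
  show "(real a - real b) * \<delta> \<noteq> 0"
    using assms delta_pos by auto
  have "\<bar>(real a - real b) * \<delta>\<bar> = \<bar>real a - real b\<bar> * \<delta>"
    using delta_pos by (simp add: abs_mult)
  also have "\<dots> \<le> (real K - 1) * \<delta>"
    using assms delta_pos by (intro mult_right_mono) auto
  also have "\<dots> < 2 * pi"
    by (rule delta_small)
  finally show "\<bar>(real a - real b) * \<delta>\<bar> < 2 * pi" .
qed

definition select_query :: mat where
  "select_query = sparse_mat [(1, P1, 1), (1, P2, 2)]"

definition select_key :: mat where
  "select_key = sparse_mat [(1, P1, 1), (1, Pc1, 1), (1, P2, 2), (1, Pc2, 2)]"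

definition select_value :: mat where
  "select_value = sparse_mat [(2, Bg, D)]"

definition position_query :: mat where
  "position_query = sparse_mat [(1, P1, 1), (1, P2, 2), (1, Bg, 2)]"

definition erase_value :: mat where
  "erase_value = sparse_mat [(-1, D, D)]"

definition row_reader :: tlayer where
  "row_reader = attention_only_layer [] [(select_query, select_key, select_value)]
     [(position_query, position_query, erase_value)]"

definition column_reader :: tlayer where
  "column_reader = attention_only_layer [(select_query, select_key, select_value)] []
     [(position_query, position_query, erase_value)]"

end

locale read_state = read_setting +
  fixes C :: nat and X :: mat
  assumes C_in_range: "C \<in> {1..K}"
    and state: "state_ok K \<delta> Bg Bl P1 P2 Pc1 Pc2 C X"
begin

lemma state_entries:
  assumes "r \<in> {1..K}"
  shows "X r Bg = (if r = 1 then 1 else 0)"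
    and "X r P1 = (if r = 1 then 0 else fst (posenc \<delta> (r - 1)))"
    and "X r P2 = (if r = 1 then 0 else snd (posenc \<delta> (r - 1)))"
    and "X r Pc1 = (if r = 1 then X C P1 else 0)"
    and "X r Pc2 = (if r = 1 then X C P2 else 0)"
  using state assms unfolding state_ok_def by auto

lemma select_scores:
  assumes "k \<in> {2..K}" and "m \<in> {1..K}"
  shows "attn_scores d X select_query select_key k m =
    (if m \<noteq> 1 then cos ((real k - real m) * \<delta>)
     else if C = 1 then 0 else cos ((real k - real C) * \<delta>))"
proof -
  have "attn_scores d X select_query select_key k m
      = X k P1 * (X m P1 + X m Pc1) + X k P2 * (X m P2 + X m Pc2)"
    using columns_distinct columns_in_range
    by (simp add: attn_scores_eq select_query_def select_key_def matmul_sparse_mat algebra_simps)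
  then show ?thesis
    using assms C_in_range state_entries[of k] state_entries[of m] state_entries[of C]
      posenc_pred_inner[of k m] posenc_pred_inner[of k C]
    by auto
qed

lemma select_attention:
  assumes "k \<in> {2..K}"
  shows "(\<Sum>m = 1..K. hardmax K (attn_scores d X select_query select_key) k m
            * matmul d X select_value m j) = (if j = D \<and> k = C then 1 else 0)"
proof -
  let ?Phi = "attn_scores d X select_query select_key"
  let ?v = "\<lambda>m. matmul d X select_value m j"
  have v: "?v m = (if j = D \<and> m = 1 then 2 else 0)" if "m \<in> {1..K}" for m
    using that columns_in_range state_entries(1)[OF that]
    by (auto simp: select_value_def matmul_sparse_mat)
  have k: "k \<in> {1..K}" "k \<noteq> 1"
    using assms by auto
  have below_diag: "?Phi k m < ?Phi k k" if "m \<in> {1..K}" "m \<noteq> k" "m \<noteq> 1 \<or> C \<noteq> k" for m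
    using that assms select_scores cos_position_diff_less_one[OF k(1)] C_in_range
    by auto
  show ?thesis
  proof (cases "k = C")
    case True
    have "?Phi k 1 = ?Phi k k"
      using assms True select_scores by simp
    then have "(\<Sum>m = 1..K. hardmax K ?Phi k m * ?v m) = (?v k + ?v 1) / 2"
      using k below_diag True by (intro hardmax_row_sum_two_max) auto
    then show ?thesis
      using k True v[of k] v[of 1] by (cases "j = D") simp_all
  next
    case False
    then have "(\<Sum>m = 1..K. hardmax K ?Phi k m * ?v m) = ?v k"
      using k below_diag by (intro hardmax_row_sum_unique_max) auto
    then show ?thesis
      using k False v[of k] by simp
  qed
qed

lemma select_head:
  assumes "\<forall>k. B k 1 = 0"
  shows "psi K d X B select_query select_key select_value i j = (if j = D then B i C else 0)"
proof -
  have "psi K d X B select_query select_key select_value i j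
      = (\<Sum>k = 1..K. if k = C then (if j = D then B i k else 0) else 0)"
    unfolding psi_eq
  proof (rule sum.cong[OF refl])
    fix k :: nat
    assume "k \<in> {1..K}"
    then show "B i k * (\<Sum>m = 1..K. hardmax K (attn_scores d X select_query select_key) k m
          * matmul d X select_value m j) = (if k = C then (if j = D then B i k else 0) else 0)"
      using assms select_attention[of k] by (cases "k = 1") auto
  qed
  then show ?thesis
    using C_in_range by (simp add: sum.delta)
qed

lemma position_scores:
  assumes "k \<in> {1..K}" and "m \<in> {1..K}"
  shows "attn_scores d X position_query position_query k m = cos ((real k - real m) * \<delta>)"
proof -
  have "attn_scores d X position_query position_query k m
      = X k P1 * X m P1 + (X k P2 + X k Bg) * (X m P2 + X m Bg)"
    using columns_distinct columns_in_range
    by (simp add: attn_scores_eq position_query_def matmul_sparse_mat algebra_simps)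
  then show ?thesis
    using assms state_entries[of k] state_entries[of m] posenc_pred_inner[of k m]
    by (auto split: if_splits)
qed

lemma erase_head:
  assumes "i \<in> {1..K}"
  shows "psi K d X idmat position_query position_query erase_value i j = (if j = D then - X i D else 0)"
proof -
  have attend_self: "(\<Sum>m = 1..K. hardmax K (attn_scores d X position_query position_query) k m
          * matmul d X erase_value m j) = matmul d X erase_value k j" if "k \<in> {1..K}" for k
    using that position_scores cos_position_diff_less_one[OF that]
    by (intro hardmax_row_sum_unique_max) auto
  have "psi K d X idmat position_query position_query erase_value i j
      = (\<Sum>k = 1..K. if k = i then matmul d X erase_value k j else 0)"
    unfolding psi_eq by (rule sum.cong[OF refl]) (use attend_self in \<open>auto simp: idmat_def\<close>)
  also have "\<dots> = matmul d X erase_value i j"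
    using assms by (simp add: sum.delta)
  finally show ?thesis
    using columns_in_range by (simp add: erase_value_def matmul_sparse_mat)
qed

lemma row_reader_apply:
  assumes "\<forall>x. At 1 x = 0" and "i \<in> {1..K}"
  shows "tlayer_apply K d row_reader X At i j = (if j = D then At C i else X i j)"
  using select_head[of "mtrans At"] erase_head[OF assms(2)] assms(1)
  by (simp add: row_reader_def tlayer_apply_attention_only_layer mtrans_def)

lemma column_reader_apply:
  assumes "\<forall>x. At x 1 = 0" and "i \<in> {1..K}"
  shows "tlayer_apply K d column_reader X At i j = (if j = D then At i C else X i j)"
  using select_head[of At] erase_head[OF assms(2)] assms(1)
  by (simp add: column_reader_def tlayer_apply_attention_only_layer)

end

lemma padded_incident_first_row_column:
  "padded_incident nv ne E w 1 x = 0" "padded_incident nv ne E w x 1 = 0"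
  by (simp_all add: padded_incident_def)

theorem lemmaC7:
  fixes K d :: nat and \<delta> :: real and Bg Bl P1 P2 Pc1 Pc2 D :: nat
  assumes "0 < \<delta>" and "(real K - 1) * \<delta> < 2 * pi"
    and "distinct [Bg, Bl, P1, P2, Pc1, Pc2, D]"
    and "set [Bg, Bl, P1, P2, Pc1, Pc2, D] \<subseteq> {1..d}"
  shows
    "(\<exists>L. \<forall>nv ne E w C X.
         weighted_hypergraph nv ne E w \<and> max nv ne + 1 \<le> K \<and> C \<in> {1..K} \<and>
         state_ok K \<delta> Bg Bl P1 P2 Pc1 Pc2 C X \<longrightarrow>
         (\<forall>i\<in>{1..K}. \<forall>j\<in>{1..d}.
            tlayer_apply K d L X (padded_incident nv ne E w) i j =
            (if j = D then padded_incident nv ne E w C i else X i j)))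
   \<and> (\<exists>L. \<forall>nv ne E w C X.
         weighted_hypergraph nv ne E w \<and> max nv ne + 1 \<le> K \<and> C \<in> {1..K} \<and>
         state_ok K \<delta> Bg Bl P1 P2 Pc1 Pc2 C X \<longrightarrow>
         (\<forall>i\<in>{1..K}. \<forall>j\<in>{1..d}.
            tlayer_apply K d L X (padded_incident nv ne E w) i j =
            (if j = D then padded_incident nv ne E w i C else X i j)))"
proof -
  interpret read_setting K d \<delta> Bg Bl P1 P2 Pc1 Pc2 D
    using assms by unfold_locales
  show ?thesis
  proof (intro conjI exI allI impI ballI)
    fix nv ne E w C X i j
    assume "weighted_hypergraph nv ne E w \<and> max nv ne + 1 \<le> K \<and> C \<in> {1..K} \<and>
      state_ok K \<delta> Bg Bl P1 P2 Pc1 Pc2 C X" and "i \<in> {1..K}"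
    then interpret read_state K d \<delta> Bg Bl P1 P2 Pc1 Pc2 D C X
      using assms by unfold_locales auto
    show "tlayer_apply K d row_reader X (padded_incident nv ne E w) i j
        = (if j = D then padded_incident nv ne E w C i else X i j)"
      using row_reader_apply padded_incident_first_row_column \<open>i \<in> {1..K}\<close> by blast
    show "tlayer_apply K d column_reader X (padded_incident nv ne E w) i j
        = (if j = D then padded_incident nv ne E w i C else X i j)"
      using column_reader_apply padded_incident_first_row_column \<open>i \<in> {1..K}\<close> by blast
  qed
qed

end
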